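(* For all $n\in\mathbb{Z}_{\ge0}$ and $i\in\{1,2\}$, the operator $A_{i,n}\partial_i^{-1}$ is a self-adjoint differential operator in $\partial_i$ (with coefficients in $\mathcal{A}$).
   Context: Let $\mathcal{A}$ be the commutative $\mathbb{C}$-algebra of differential polynomials generated by $u$, $(v_i)_{i\ge0}$, $(w_j)_{j\ge0}$ and their jets under two commuting derivations $\partial_1,\partial_2$, subject to the relations $\partial_2(\mathcal{L}_1)=[\mathcal{L}_1,\partial_1^{-1}u]$ and $\partial_1(\mathcal{L}_2)=[\mathcal{L}_2,\partial_2^{-1}u]$, where $\mathcal{L}_1=\partial_1^{-1}(\partial_1^2+v_0+\partial_1^{-1}v_1\partial_1^{-1}+\partial_1^{-2}v_2\partial_1^{-2}+\cdots)$, $\mathcal{L}_2=\partial_2^{-1}(\partial_2^2+w_0+\partial_2^{-1}w_1\partial_2^{-1}+\partial_2^{-2}w_2\partial_2^{-2}+\cdots)$, and $\partial_2(\mathcal{L}_1)$ (resp. $\partial_1(\mathcal{L}_2)$) means $\partial_2$ (resp. $\partial_1$) applied to each coefficient $v_k$ (resp. $w_k$). Concretely $\mathcal{A}=\mathbb{C}[\partial_1^n(v_m),\partial_2^k(w_l),\partial_1^p\partial_2^q(u)]$ is a polynomial ring (a domain), and $\partial_2$-jets of the $v_m$ and $\partial_1$-jets of the $w_l$ are determined by the relations. Pseudodifferential operators over $\mathcal{A}$ are as usual: $\partial_i a=a\partial_i+\partial_i(a)$, $\partial_i^{-1}a=a\partial_i^{-1}-\partial_i(a)\partial_i^{-2}+\cdots$.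 The adjoint is the anti-automorphism with $\partial_i^*=-\partial_i$, $a^*=a$ for $a\in\mathcal{A}$, $(PQ)^*=Q^*P^*$. For $\mathcal{P}=\sum_n p_n\partial_i^n$ a pseudodifferential operator in $\partial_i$, $\mathcal{P}_+=\sum_{n\ge0}p_n\partial_i^n$ and $\mathcal{P}_-=\mathcal{P}-\mathcal{P}_+$. Define $A_{i,n}=(\mathcal{L}_i^{2n+1})_+\in\mathcal{A}[\partial_i]$. Note $\partial_i\mathcal{L}_i$ is self-adjoint, i.e. $\partial_i\mathcal{L}_i+\mathcal{L}_i^*\partial_i=0$. *)

theory Defs
  imports Main
begin

text \<open>An operator \<Sum>_j P j \<partial>^j is represented by its coefficient function P :: int \<Rightarrow> 'a,
  whose support must be bounded above.\<close>

definition is_psdo :: "(int \<Rightarrow> 'a::zero) \<Rightarrow> bool" where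
  "is_psdo P \<longleftrightarrow> (\<exists>N. \<forall>j>N. P j = 0)"

definition is_derivation :: "('a::comm_ring_1 \<Rightarrow> 'a) \<Rightarrow> bool" where
  "is_derivation d \<longleftrightarrow> (\<forall>a b. d (a + b) = d a + d b) \<and> (\<forall>a b. d (a * b) = a * d b + d a * b)"

definition pconst :: "'a::zero \<Rightarrow> int \<Rightarrow> 'a" where
  "pconst a = (\<lambda>j. if j = 0 then a else 0)"

definition pdpow :: "int \<Rightarrow> int \<Rightarrow> 'a::{zero,one}" where
  "pdpow m = (\<lambda>j. if j = m then 1 else 0)"

definition padd :: "(int \<Rightarrow> 'a::plus) \<Rightarrow> (int \<Rightarrow> 'a) \<Rightarrow> int \<Rightarrow> 'a" where
  "padd P Q = (\<lambda>j. P j + Q j)"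

definition psub :: "(int \<Rightarrow> 'a::minus) \<Rightarrow> (int \<Rightarrow> 'a) \<Rightarrow> int \<Rightarrow> 'a" where
  "psub P Q = (\<lambda>j. P j - Q j)"

text \<open>generalized binomial coefficient binom(m,k) = m(m-1)...(m-k+1)/k! for integer m\<close>
definition ibinom :: "int \<Rightarrow> nat \<Rightarrow> int" where
  "ibinom m k = (if 0 \<le> m then int (nat m choose k)
                 else (-1) ^ k * int ((nat (- m) + k - 1) choose k))"

text \<open>Product: (p \<partial>^m)(q \<partial>^n) = \<Sum>_{k\<ge>0} binom(m,k) p d^k(q) \<partial>^(m+n-k)\<close>
definition pmult :: "('a::comm_ring_1 \<Rightarrow> 'a) \<Rightarrow> (int \<Rightarrow> 'a) \<Rightarrow> (int \<Rightarrow> 'a) \<Rightarrow> int \<Rightarrow> 'a" where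
  "pmult d P Q = (\<lambda>j. \<Sum>(m, k) \<in> {(m, k::nat). P m \<noteq> 0 \<and> Q (j - m + int k) \<noteq> 0}.
      of_int (ibinom m k) * P m * (d ^^ k) (Q (j - m + int k)))"

primrec ppow :: "('a::comm_ring_1 \<Rightarrow> 'a) \<Rightarrow> (int \<Rightarrow> 'a) \<Rightarrow> nat \<Rightarrow> int \<Rightarrow> 'a" where
  "ppow d P 0 = pdpow 0"
| "ppow d P (Suc n) = pmult d (ppow d P n) P"

text \<open>locally finite (coefficientwise) infinite sum of operators\<close>
definition psum :: "(nat \<Rightarrow> int \<Rightarrow> 'a::comm_monoid_add) \<Rightarrow> int \<Rightarrow> 'a" where
  "psum F = (\<lambda>j. \<Sum>k \<in> {k. F k j \<noteq> 0}. F k j)"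

definition pplus :: "(int \<Rightarrow> 'a::zero) \<Rightarrow> int \<Rightarrow> 'a" where
  "pplus P = (\<lambda>j. if 0 \<le> j then P j else 0)"

text \<open>Formal adjoint: (\<Sum>_m p_m \<partial>^m)^* = \<Sum>_m (-\<partial>)^m p_m, written out in normal form.\<close>
definition padj :: "('a::comm_ring_1 \<Rightarrow> 'a) \<Rightarrow> (int \<Rightarrow> 'a) \<Rightarrow> int \<Rightarrow> 'a" where
  "padj d P = (\<lambda>j. \<Sum>k \<in> {k::nat. P (j + int k) \<noteq> 0}.
      (if even (j + int k) then 1 else -1) * of_int (ibinom (j + int k) k) * (d ^^ k) (P (j + int k)))"

definition is_diffop :: "(int \<Rightarrow> 'a::zero) \<Rightarrow> bool" where
  "is_diffop P \<longleftrightarrow> is_psdo P \<and> (\<forall>j<0. P j = 0)"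

definition self_adjoint :: "('a::comm_ring_1 \<Rightarrow> 'a) \<Rightarrow> (int \<Rightarrow> 'a) \<Rightarrow> bool" where
  "self_adjoint d P \<longleftrightarrow> padj d P = P"

definition Lax :: "('a::comm_ring_1 \<Rightarrow> 'a) \<Rightarrow> (nat \<Rightarrow> 'a) \<Rightarrow> int \<Rightarrow> 'a" where
  "Lax d v = pmult d (pdpow (-1))
     (padd (padd (pdpow 2) (pconst (v 0)))
       (psum (\<lambda>k. if k = 0 then (\<lambda>_. 0)
                  else pmult d (pmult d (pdpow (- int k)) (pconst (v k))) (pdpow (- int k)))))"

definition Aop :: "('a::comm_ring_1 \<Rightarrow> 'a) \<Rightarrow> (nat \<Rightarrow> 'a) \<Rightarrow> nat \<Rightarrow> int \<Rightarrow> 'a" where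
  "Aop d v n = pplus (ppow d (Lax d v) (2 * n + 1))"

end

theory Submission
  imports Defs "HOL-Library.Groups_Big_Fun" "HOL-Computational_Algebra.Formal_Power_Series"
begin

text \<open>
  Write \<open>L = \<partial>\<^sup>-\<^sup>1 T\<close> with \<open>T = \<partial>\<^sup>2 + v\<^sub>0 + \<Sum>\<^sub>k \<partial>\<^sup>-\<^sup>k v\<^sub>k \<partial>\<^sup>-\<^sup>k\<close>, which is self-adjoint.
  Since \<open>(\<partial>\<^sup>-\<^sup>1)\<^sup>* = -\<partial>\<^sup>-\<^sup>1\<close>, we get \<open>L\<^sup>* = -T \<partial>\<^sup>-\<^sup>1 = -\<partial> L \<partial>\<^sup>-\<^sup>1\<close>, and as \<open>L\<close> commutes with
  its powers, \<open>(L\<^sup>m)\<^sup>* = (-1)\<^sup>m \<partial> L\<^sup>m \<partial>\<^sup>-\<^sup>1\<close>. For odd \<open>m\<close> the operator \<open>B = L\<^sup>m \<partial>\<^sup>-\<^sup>1\<close> is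
  therefore self-adjoint. The \<open>\<partial>\<^sup>-\<^sup>1\<close>-coefficient \<open>b\<close> of a self-adjoint operator satisfies
  \<open>b = -b\<close>, so it vanishes in characteristic zero; for \<open>B\<close> it is the constant term of \<open>L\<^sup>m\<close>.
  Hence \<open>(L\<^sup>m)\<^sub>+ \<partial>\<^sup>-\<^sup>1 = B\<^sub>+\<close>, and truncation to the differential part commutes with the
  adjoint.

  The formal work lies in the associativity of the product and in \<open>(PQ)\<^sup>* = Q\<^sup>* P\<^sup>*\<close>:
  expanding both sides coefficientwise with the Leibniz rule, they reduce to two
  Vandermonde-type identities for binomial coefficients with integer upper argument.
\<close>

section \<open>Iterated derivations\<close>

locale derivation =
  fixes d :: "'a::comm_ring_1 \<Rightarrow> 'a"
  assumes is_derivation: "is_derivation d"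
begin

abbreviation D :: "nat \<Rightarrow> 'a \<Rightarrow> 'a" where "D k \<equiv> d ^^ k"

lemma d_add: "d (a + b) = d a + d b"
  using is_derivation by (simp add: is_derivation_def)

lemma d_mult: "d (a * b) = a * d b + d a * b"
  using is_derivation by (simp add: is_derivation_def)

lemma d_0 [simp]: "d 0 = 0"
  using d_add[of 0 0] by simp

lemma d_neg [simp]: "d (- a) = - d a"
  using d_add[of a "- a"] by (simp add: add_eq_0_iff2)

lemma d_1 [simp]: "d 1 = 0"
  using d_mult[of 1 1] by simp

lemma d_of_nat [simp]: "d (of_nat n) = 0"
  by (induct n) (simp_all add: d_add)

lemma d_of_int [simp]: "d (of_int n) = 0"
proof -
  obtain a b where "n = int a - int b"
    by (rule int_diff_cases)
  then show ?thesis
    using d_add[of "of_nat a" "- of_nat b"] by simp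
qed

lemma D_0 [simp]: "D k 0 = 0"
  by (induct k) simp_all

lemma D_1: "D k 1 = (if k = 0 then 1 else 0)"
  using d_of_int[of 1] by (induct k) simp_all

lemma D_add: "D k (a + b) = D k a + D k b"
  by (induct k) (simp_all add: d_add)

lemma D_const_mult: "d c = 0 \<Longrightarrow> D k (c * a) = c * D k a"
  by (induct k) (simp_all add: d_mult)

lemma D_of_int_mult: "D k (of_int c * a) = of_int c * D k a"
  by (simp add: D_const_mult)

lemma D_D: "D k (D l a) = D (k + l) a"
  by (simp add: funpow_add)

lemma D_sum: "D k (sum f A) = (\<Sum>x\<in>A. D k (f x))"
  by (induct A rule: infinite_finite_induct) (simp_all add: D_add)

lemma D_Sum_any:
  assumes "finite {x. f x \<noteq> 0}"
  shows "D k (Sum_any f) = Sum_any (\<lambda>x. D k (f x))"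
proof -
  have supp: "{x. D k (f x) \<noteq> 0} \<subseteq> {x. f x \<noteq> 0}"
    by auto
  show ?thesis
    by (simp add: Sum_any.expand_superset[OF assms order_refl]
        Sum_any.expand_superset[OF assms supp] D_sum)
qed

lemma D_mult: "D n (a * b) = (\<Sum>k\<le>n. of_nat (n choose k) * D k a * D (n - k) b)"
proof (induct n)
  case 0
  then show ?case by simp
next
  case (Suc n)
  have "D (n + 1) (a * b) = d (\<Sum>k\<le>n. of_nat (n choose k) * D k a * D (n - k) b)"
    using Suc.hyps by simp
  also have "\<dots> = (\<Sum>k\<le>n. of_nat (n choose k) * D (k + 1) a * D (n - k) b) +
      (\<Sum>k\<le>n. of_nat (n choose k) * D k a * D (n - k + 1) b)"
    by (simp add: D_sum[of 1, simplified] d_mult d_add sum.distrib algebra_simps)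
  also have "\<dots> = (\<Sum>k\<le>n. of_nat (n choose k) * D k a * D (n + 1 - k) b) +
      (\<Sum>k=1..n+1. of_nat (n choose (k - 1)) * D k a * D (n + 1 - k) b)"
    by (simp add: atMost_atLeast0 sum.shift_bounds_cl_Suc_ivl Suc_diff_le field_simps
        del: sum.cl_ivl_Suc)
  also have "\<dots> = D (n + 1) b * a +
      (\<Sum>k=1..n. of_nat (n choose k) * D k a * D (n + 1 - k) b) + (D (n + 1) a * b +
      (\<Sum>k=1..n. of_nat (n choose (k - 1)) * D k a * D (n + 1 - k) b))"
    using sum.nat_ivl_Suc'[of 1 n "\<lambda>k. of_nat (n choose (k - 1)) * D k a * D (n + 1 - k) b"]
    by (simp add: sum.atLeast_Suc_atMost atMost_atLeast0)
  also have "\<dots> = D (n + 1) a * b + D (n + 1) b * a +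
      (\<Sum>k=1..n. of_nat (n + 1 choose k) * D k a * D (n + 1 - k) b)"
    by (auto simp add: field_simps sum.distrib [symmetric] choose_reduce_nat)
  also have "\<dots> = (\<Sum>k\<le>n+1. of_nat (n + 1 choose k) * D k a * D (n + 1 - k) b)"
    by (simp add: atMost_atLeast0 sum.atLeast_Suc_atMost field_simps)
  finally show ?case
    by simp
qed

end

section \<open>Binomial identities\<close>

lemma of_int_ibinom: "(of_int (ibinom m k) :: 'a::field_char_0) = of_int m gchoose k"
proof (cases "0 \<le> m")
  case True
  then obtain n where "m = int n"
    by (metis nonneg_int_cases)
  then show ?thesis
    by (simp add: ibinom_def binomial_gbinomial)
next
  case False
  define n where "n = nat (- m)"
  have n: "m = - int n" "n \<ge> 1"
    using False by (auto simp: n_def)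
  have "(of_nat n + of_nat k - 1 :: 'a) = of_nat (n + k - 1)"
    using n by (simp add: of_nat_diff)
  then show ?thesis
    using n False by (simp add: ibinom_def gbinomial_minus binomial_gbinomial)
qed

lemma ibinom_eq_0_if_nonneg_less: "0 \<le> m \<Longrightarrow> m < int k \<Longrightarrow> ibinom m k = 0"
  by (simp add: ibinom_def)

lemma gbinomial_Vandermonde_atMost:
  "(\<Sum>c\<le>l. (x gchoose c) * (y gchoose (l - c))) = ((x + y) gchoose l :: 'a::field_char_0)"
  using gbinomial_Vandermonde[of x y l] by (simp add: atMost_atLeast0)

text \<open>The coefficient identity behind associativity of the product.\<close>
lemma ibinom_assoc:
  "ibinom (n + m - int a) l * ibinom m a
     = (\<Sum>c\<le>l. ibinom m (a + c) * int ((a + c) choose a) * ibinom n (l - c))"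
proof -
  have revision: "(of_int m gchoose (a + c)) * of_nat ((a + c) choose a)
      = (of_int m gchoose a) * ((of_int m - of_nat a) gchoose c :: rat)" for c
    using gbinomial_trinomial_revision[of a "a + c" "of_int m :: rat"]
    by (simp add: binomial_gbinomial)
  have "(of_int (\<Sum>c\<le>l. ibinom m (a + c) * int ((a + c) choose a) * ibinom n (l - c)) :: rat)
      = (of_int m gchoose a) * (\<Sum>c\<le>l. ((of_int m - of_nat a) gchoose c) * (of_int n gchoose (l - c)))"
    unfolding of_int_sum sum_distrib_left
    by (intro sum.cong refl) (simp add: of_int_ibinom revision[symmetric] mult.assoc)
  also have "\<dots> = (of_int m gchoose a) * ((of_int m - of_nat a + of_int n) gchoose l)"
    by (simp only: gbinomial_Vandermonde_atMost)
  also have "\<dots> = of_int (ibinom (n + m - int a) l * ibinom m a)"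
    by (simp add: of_int_ibinom algebra_simps)
  finally show ?thesis
    by (simp only: of_int_eq_iff)
qed

definition neg_one_power :: "int \<Rightarrow> 'a::comm_ring_1" where
  "neg_one_power z = (if even z then 1 else - 1)"

lemma neg_one_power_add: "neg_one_power (x + y) = neg_one_power x * neg_one_power y"
  by (auto simp: neg_one_power_def)

lemma neg_one_power_add_nat: "neg_one_power (z + int c) = neg_one_power z * (- 1) ^ c"
  by (induct c) (auto simp: neg_one_power_def algebra_simps)

lemma neg_one_power_square: "neg_one_power z * neg_one_power z = 1"
  by (simp add: neg_one_power_def)

lemma of_int_neg_one_power [simp]: "of_int (neg_one_power z) = neg_one_power z"
  by (simp add: neg_one_power_def)

lemma gbinomial_minus_minus_one:
  "(- y - 1) gchoose k = (- 1) ^ k * ((y + of_nat k) gchoose k :: 'a::field_char_0)"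
proof -
  have "(- y - 1) gchoose k = (- (y + 1)) gchoose k"
    by (rule arg_cong[where f = "\<lambda>z. z gchoose k"]) simp
  also have "\<dots> = (- 1) ^ k * ((y + 1 + of_nat k - 1) gchoose k)"
    by (rule gbinomial_minus)
  finally show ?thesis
    by simp
qed

text \<open>The coefficient identity behind \<open>(PQ)\<^sup>* = Q\<^sup>* P\<^sup>*\<close>.\<close>
lemma gbinomial_adjoint_identity:
  fixes j m :: int and a e :: nat
  defines "x \<equiv> of_int (j + int a) :: 'a::field_char_0"
  shows "(\<Sum>c\<le>e. neg_one_power (j + int a + int c) * (of_int (j + int a + int c) gchoose (a + c))
            * of_nat ((a + c) choose a) * (of_int m gchoose (e - c)))
       = neg_one_power (j - m + int a + int e) * neg_one_power m
           * (of_int (j - m + int a + int e) gchoose e) * (x gchoose a)"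
proof -
  have revision: "(of_int (j + int a + int c) gchoose (a + c)) * of_nat ((a + c) choose a)
      = (x gchoose a) * (of_int (j + int a + int c) gchoose c)" for c
    using gbinomial_trinomial_revision[of c "a + c" "of_int (j + int a + int c) :: 'a"]
    by (simp add: x_def binomial_gbinomial binomial_symmetric[of a "a + c", simplified] mult.commute)
  have sign: "neg_one_power (j + int a + int c) * (of_int (j + int a + int c) gchoose c)
      = neg_one_power (j + int a) * ((- x - 1) gchoose c)" for c
  proof -
    have "(- x - 1) gchoose c = (- 1) ^ c * (of_int (j + int a + int c) gchoose c)"
      using gbinomial_minus_minus_one[of x c] by (simp add: x_def)
    then show ?thesis
      using neg_one_power_add_nat[of "j + int a" c] by (metis mult.assoc)
  qed
  have signs: "neg_one_power (j - m + int a + int e) * neg_one_power m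
      = neg_one_power (j + int a) * ((- 1) ^ e :: 'a)"
  proof -
    have "neg_one_power (j - m + int a + int e) * neg_one_power m
        = (neg_one_power (j - m + int a + int e + m) :: 'a)"
      by (rule neg_one_power_add[symmetric])
    also have "\<dots> = neg_one_power (j + int a + int e)"
      by (simp add: algebra_simps)
    also have "\<dots> = neg_one_power (j + int a) * (- 1) ^ e"
      by (rule neg_one_power_add_nat)
    finally show ?thesis
      by simp
  qed
  have "(\<Sum>c\<le>e. neg_one_power (j + int a + int c) * (of_int (j + int a + int c) gchoose (a + c))
            * of_nat ((a + c) choose a) * (of_int m gchoose (e - c)))
      = (x gchoose a) * neg_one_power (j + int a)
          * (\<Sum>c\<le>e. ((- x - 1) gchoose c) * (of_int m gchoose (e - c)))"
    unfolding sum_distrib_left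
  proof (intro sum.cong refl)
    fix c
    show "neg_one_power (j + int a + int c) * (of_int (j + int a + int c) gchoose (a + c))
            * of_nat ((a + c) choose a) * (of_int m gchoose (e - c))
        = (x gchoose a) * neg_one_power (j + int a) * (((- x - 1) gchoose c) * (of_int m gchoose (e - c)))"
      using revision[of c] sign[of c] by algebra
  qed
  also have "\<dots> = (x gchoose a) * neg_one_power (j + int a) * ((- x - 1 + of_int m) gchoose e)"
    by (simp only: gbinomial_Vandermonde_atMost)
  also have "(- x - 1 + of_int m) gchoose e = (- 1) ^ e * (of_int (j - m + int a + int e) gchoose e)"
    using gbinomial_minus_minus_one[of "x - of_int m" e] by (simp add: x_def algebra_simps)
  finally show ?thesis
    unfolding signs by (simp only: mult_ac)
qed

lemma ibinom_adjoint_identity: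
  "(\<Sum>c\<le>e. neg_one_power (j + int a + int c) * ibinom (j + int a + int c) (a + c)
              * int ((a + c) choose a) * ibinom m (e - c))
     = neg_one_power (j - m + int a + int e) * neg_one_power m * ibinom (j - m + int a + int e) e
         * (\<Sum>c\<le>a. ibinom (j - m + int a) c * ibinom m (a - c))"
proof -
  have "(of_int (\<Sum>c\<le>e. neg_one_power (j + int a + int c) * ibinom (j + int a + int c) (a + c)
              * int ((a + c) choose a) * ibinom m (e - c)) :: rat)
     = of_int (neg_one_power (j - m + int a + int e) * neg_one_power m * ibinom (j - m + int a + int e) e
         * (\<Sum>c\<le>a. ibinom (j - m + int a) c * ibinom m (a - c)))"
    using gbinomial_adjoint_identity[where 'a = rat, of j a m e]
      gbinomial_Vandermonde_atMost[of "of_int (j - m + int a) :: rat" "of_int m" a]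
    by (simp add: of_int_ibinom)
  then show ?thesis
    by (simp only: of_int_eq_iff)
qed

section \<open>Finitely supported sums\<close>

lemma finite_support_bij: "bij h \<Longrightarrow> finite {y. f (h y) \<noteq> 0} \<Longrightarrow> finite {x. f x \<noteq> 0}"
  by (rule finite_subset[of _ "h ` {y. f (h y) \<noteq> 0}"]) (auto elim: bij_pointE)

lemma Sum_any_reindex_inj_on:
  fixes f :: "'b \<Rightarrow> 'a::comm_monoid_add"
  assumes "inj_on g {y. f (g y) \<noteq> 0}" and "{x. f x \<noteq> 0} \<subseteq> range g"
  shows "Sum_any f = Sum_any (\<lambda>y. f (g y))"
proof -
  have bij: "bij_betw g {y. f (g y) \<noteq> 0} {x. f x \<noteq> 0}"
    unfolding bij_betw_def using assms by auto
  show ?thesis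
  proof (cases "finite {x. f x \<noteq> 0}")
    case True
    with bij show ?thesis
      by (simp add: Sum_any.expand_set sum.reindex_bij_betw[OF bij, symmetric] bij_betw_finite)
  next
    case False
    with bij show ?thesis
      by (simp add: bij_betw_finite)
  qed
qed

lemma Sum_any_pair:
  fixes g :: "'b \<Rightarrow> 'c \<Rightarrow> 'a::comm_monoid_add"
  assumes "finite {(a, b). g a b \<noteq> 0}"
  shows "Sum_any (\<lambda>a. Sum_any (g a)) = Sum_any (\<lambda>(a, b). g a b)"
proof -
  let ?S = "{(a, b). g a b \<noteq> 0}"
  have "{a. \<exists>b. g a b \<noteq> 0} \<times> {b. \<exists>a. g a b \<noteq> 0} \<subseteq> fst ` ?S \<times> snd ` ?S"
    by (auto simp: image_iff)
  then show ?thesis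
    using assms by (intro Sum_any.cartesian_product) auto
qed

lemma Sum_any_triple:
  fixes g :: "'b \<Rightarrow> 'c \<Rightarrow> 'd \<Rightarrow> 'a::comm_monoid_add"
  assumes fin: "finite {(a, b, c). g a b c \<noteq> 0}"
  shows "Sum_any (\<lambda>a. Sum_any (\<lambda>b. Sum_any (g a b))) = Sum_any (\<lambda>(a, b, c). g a b c)"
proof -
  have "finite {(b, c). g a b c \<noteq> 0}" for a
    by (rule finite_subset[OF _ finite_imageI[OF fin, of snd]]) (auto simp: image_iff)
  then have "Sum_any (\<lambda>b. Sum_any (g a b)) = Sum_any (\<lambda>(b, c). g a b c)" for a
    by (rule Sum_any_pair)
  moreover have "finite {(a, w). (case w of (b, c) \<Rightarrow> g a b c) \<noteq> 0}"
    using fin by (simp add: case_prod_unfold)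
  ultimately show ?thesis
    by (simp add: Sum_any_pair case_prod_unfold)
qed

lemma Sum_any_pair_atMost:
  fixes g :: "'b \<Rightarrow> 'c \<Rightarrow> nat \<Rightarrow> 'a::comm_monoid_add"
  assumes fin: "finite {(a, b, c). c \<le> h b \<and> g a b c \<noteq> 0}"
  shows "Sum_any (\<lambda>(a, b). \<Sum>c\<le>h b. g a b c)
       = Sum_any (\<lambda>(a, b, c). if c \<le> h b then g a b c else 0)"
proof -
  define g' where "g' a b c = (if c \<le> h b then g a b c else 0)" for a b c
  have fin': "finite {(a, b, c). g' a b c \<noteq> 0}"
    by (rule finite_subset[OF _ fin]) (auto simp: g'_def split: if_splits)
  have conditional: "(\<Sum>c\<le>h b. g a b c) = Sum_any (g' a b)" for a b
    by (simp add: Sum_any.conditionalize[of "{..h b}"] g'_def)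
  have "{(a, b). Sum_any (g' a b) \<noteq> 0} \<subseteq> (\<lambda>(a, b, c). (a, b)) ` {(a, b, c). g' a b c \<noteq> 0}"
    by (force elim: Sum_any.not_neutral_obtains_not_neutral)
  then have "finite {(a, b). Sum_any (g' a b) \<noteq> 0}"
    using fin' finite_surj by blast
  then have "Sum_any (\<lambda>(a, b). Sum_any (g' a b)) = Sum_any (\<lambda>a. Sum_any (\<lambda>b. Sum_any (g' a b)))"
    by (rule Sum_any_pair[symmetric])
  also have "\<dots> = Sum_any (\<lambda>(a, b, c). g' a b c)"
    by (rule Sum_any_triple[OF fin'])
  finally show ?thesis
    by (simp add: conditional g'_def)
qed

lemma Sum_any_sum:
  fixes f :: "'i \<Rightarrow> 'b \<Rightarrow> 'a::comm_monoid_add"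
  assumes "finite A" and "\<And>i. i \<in> A \<Longrightarrow> finite {x. f i x \<noteq> 0}"
  shows "Sum_any (\<lambda>x. \<Sum>i\<in>A. f i x) = (\<Sum>i\<in>A. Sum_any (f i))"
  using assms
proof (induct A rule: finite_induct)
  case empty
  then show ?case by simp
next
  case (insert a A)
  have "{x. (\<Sum>i\<in>A. f i x) \<noteq> 0} \<subseteq> (\<Union>i\<in>A. {x. f i x \<noteq> 0})"
    by (auto elim: sum.not_neutral_contains_not_neutral)
  then have "finite {x. (\<Sum>i\<in>A. f i x) \<noteq> 0}"
    by (rule finite_subset) (use insert in auto)
  then show ?case
    using insert by (simp add: Sum_any.distrib)
qed

lemma Sum_any_mult_both:
  fixes f :: "'b \<Rightarrow> 'a::comm_ring_1"
  assumes "finite {x. f x \<noteq> 0}"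
  shows "a * Sum_any f * b = Sum_any (\<lambda>x. a * f x * b)"
proof -
  have "finite {x. a * f x \<noteq> 0}"
    by (rule finite_subset[OF _ assms]) auto
  then show ?thesis
    by (simp add: Sum_any_right_distrib[OF assms] Sum_any_left_distrib)
qed

lemma Sum_any_mult_Sum_any:
  fixes f g :: "'b \<Rightarrow> 'a::comm_ring_1"
  assumes "finite {a. f a \<noteq> 0}" and "finite {b. g b \<noteq> 0}"
  shows "c * Sum_any f * Sum_any g = Sum_any (\<lambda>a. Sum_any (\<lambda>b. c * f a * g b))"
proof -
  have "finite {a. c * f a \<noteq> 0}"
    by (rule finite_subset[OF _ assms(1)]) auto
  then show ?thesis
    by (simp add: Sum_any_right_distrib[OF assms(1)] Sum_any_product assms(2))
qed

definition vanishes_above :: "int \<Rightarrow> (int \<Rightarrow> 'a::zero) \<Rightarrow> bool" where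
  "vanishes_above N P \<longleftrightarrow> (\<forall>j>N. P j = 0)"

lemma vanishes_aboveD: "vanishes_above N P \<Longrightarrow> P m \<noteq> 0 \<Longrightarrow> m \<le> N"
  unfolding vanishes_above_def using not_le by blast

lemma vanishes_above_mono: "vanishes_above N P \<Longrightarrow> N \<le> M \<Longrightarrow> vanishes_above M P"
  unfolding vanishes_above_def by auto

lemma is_psdo_iff_vanishes_above: "is_psdo P \<longleftrightarrow> (\<exists>N. vanishes_above N P)"
  by (simp add: is_psdo_def vanishes_above_def)

definition pscale :: "'a::times \<Rightarrow> (int \<Rightarrow> 'a) \<Rightarrow> int \<Rightarrow> 'a" where
  "pscale c P = (\<lambda>j. c * P j)"

lemma pscale_pscale: "pscale a (pscale b P) = pscale (a * b) (P :: int \<Rightarrow> 'a::semigroup_mult)"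
  by (simp add: pscale_def mult.assoc)

lemma pscale_1 [simp]: "pscale 1 P = (P :: int \<Rightarrow> 'a::monoid_mult)"
  by (simp add: pscale_def)

lemma is_psdo_pdpow [simp]: "is_psdo (pdpow m)"
  by (auto simp: is_psdo_def pdpow_def)

lemma is_psdo_pconst [simp]: "is_psdo (pconst a)"
  by (auto simp: is_psdo_def pconst_def)

lemma is_psdo_pscale [simp]: "is_psdo P \<Longrightarrow> is_psdo (pscale c (P :: int \<Rightarrow> 'a::mult_zero))"
  unfolding is_psdo_def pscale_def by (metis mult_zero_right[of c])

lemma is_psdo_pplus [simp]: "is_psdo P \<Longrightarrow> is_psdo (pplus P)"
  by (auto simp: is_psdo_def pplus_def)

lemma is_psdo_padd [simp]: "is_psdo P \<Longrightarrow> is_psdo Q \<Longrightarrow> is_psdo (padd P (Q :: int \<Rightarrow> 'a::monoid_add))"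
  unfolding is_psdo_def padd_def by (metis add.right_neutral max.strict_boundedE)

definition ibin :: "int \<Rightarrow> nat \<Rightarrow> 'a::comm_ring_1" where
  "ibin m k = of_int (ibinom m k)"

lemma ibin_0 [simp]: "ibin m 0 = 1"
  by (simp add: ibin_def ibinom_def)

lemma ibin_0_left: "ibin 0 k = (if k = 0 then 1 else 0)"
  by (cases k) (simp_all add: ibin_def ibinom_def)

lemma ibin_assoc:
  "ibin (n + m - int a) l * ibin m a
     = (\<Sum>c\<le>l. ibin m (a + c) * of_nat ((a + c) choose a) * ibin n (l - c))"
  using arg_cong[OF ibinom_assoc[of n m a l], of "of_int :: int \<Rightarrow> 'a"] by (simp add: ibin_def)

lemma ibin_adjoint_identity:
  "(\<Sum>c\<le>e. neg_one_power (j + int a + int c) * ibin (j + int a + int c) (a + c)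
              * of_nat ((a + c) choose a) * ibin m (e - c))
     = neg_one_power (j - m + int a + int e) * neg_one_power m * ibin (j - m + int a + int e) e
         * (\<Sum>c\<le>a. ibin (j - m + int a) c * ibin m (a - c) :: 'a::comm_ring_1)"
  using arg_cong[OF ibinom_adjoint_identity[where j = j and a = a and e = e and m = m],
      of "of_int :: int \<Rightarrow> 'a"]
  by (simp add: ibin_def)

definition assoc_box :: "int \<Rightarrow> int \<Rightarrow> ((int \<times> nat) \<times> (int \<times> nat) \<times> nat) set" where
  "assoc_box N j = ({j - 2 * N..N} \<times> {..nat (3 * N - j)})
     \<times> ({j - 2 * N..N} \<times> {..nat (3 * N - j)}) \<times> {..nat (3 * N - j)}"

lemma finite_assoc_box: "finite (assoc_box N j)"
  by (simp add: assoc_box_def)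

lemma mem_assoc_box:
  "m \<le> N \<Longrightarrow> n \<le> N \<Longrightarrow> j - m + int k - n + int l \<le> N \<Longrightarrow> c \<le> k \<or> c \<le> l
    \<Longrightarrow> ((m, k), (n, l), c) \<in> assoc_box N j"
  unfolding assoc_box_def by (auto simp: le_nat_iff)

section \<open>The product and its associativity\<close>

context derivation
begin

definition pmul :: "(int \<Rightarrow> 'a) \<Rightarrow> (int \<Rightarrow> 'a) \<Rightarrow> int \<Rightarrow> 'a" where
  "pmul P Q j = Sum_any (\<lambda>p. ibin (fst p) (snd p) * P (fst p) * D (snd p) (Q (j - fst p + int (snd p))))"

lemma finite_pmul_indices:
  assumes "vanishes_above N P" and "vanishes_above M Q"
  shows "finite {(m, k::nat). P m \<noteq> 0 \<and> Q (j - m + int k) \<noteq> 0}"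
proof (rule finite_subset[of _ "{j - M..N} \<times> {..nat (N + M - j)}"])
  show "{(m, k::nat). P m \<noteq> 0 \<and> Q (j - m + int k) \<noteq> 0} \<subseteq> {j - M..N} \<times> {..nat (N + M - j)}"
    using vanishes_aboveD[OF assms(1)] vanishes_aboveD[OF assms(2)] by (force simp: le_nat_iff)
qed simp

lemma finite_support_pmul:
  assumes "vanishes_above N P" and "vanishes_above M Q"
  shows "finite {p. ibin (fst p) (snd p) * P (fst p) * D (snd p) (Q (j - fst p + int (snd p))) \<noteq> 0}"
  by (rule finite_subset[OF _ finite_pmul_indices[OF assms, of j]]) auto

lemma pmult_eq_pmul:
  assumes "vanishes_above N P" and "vanishes_above M Q"
  shows "pmult d P Q = pmul P Q"
proof
  fix j
  let ?S = "{(m, k::nat). P m \<noteq> 0 \<and> Q (j - m + int k) \<noteq> 0}"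
  have "finite ?S"
    by (rule finite_pmul_indices[OF assms])
  then have "pmul P Q j = (\<Sum>p\<in>?S. ibin (fst p) (snd p) * P (fst p) * D (snd p) (Q (j - fst p + int (snd p))))"
    unfolding pmul_def by (rule Sum_any.expand_superset) auto
  then show "pmult d P Q j = pmul P Q j"
    unfolding pmult_def by (auto simp: ibin_def case_prod_beta intro!: sum.cong)
qed

lemma vanishes_above_pmul:
  assumes "vanishes_above N P" and "vanishes_above M Q"
  shows "vanishes_above (N + M) (pmul P Q)"
proof -
  have "ibin m k * P m * D k (Q (j - m + int k)) = 0" if "j > N + M" for j m k
  proof (cases "P m = 0")
    case False
    then have "m \<le> N"
      by (rule vanishes_aboveD[OF assms(1)])
    with that have "Q (j - m + int k) = 0"
      using assms(2) unfolding vanishes_above_def by auto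
    then show ?thesis
      by simp
  qed simp
  then show ?thesis
    unfolding vanishes_above_def pmul_def by simp
qed

lemma is_psdo_pmul [simp]: "is_psdo P \<Longrightarrow> is_psdo Q \<Longrightarrow> is_psdo (pmul P Q)"
  by (auto simp: is_psdo_iff_vanishes_above dest: vanishes_above_pmul)

lemma mult_D_pmul_eq_Sum_any:
  assumes P: "vanishes_above N P" and Q: "vanishes_above M Q"
  shows "c * D t (pmul P Q s) = Sum_any (\<lambda>y. Sum_any (\<lambda>a. if a \<le> t then
      c * (ibin (fst y) (snd y) * (of_nat (t choose a) * D a (P (fst y))
        * D (t - a + snd y) (Q (s - fst y + int (snd y))))) else 0))"
proof -
  let ?F = "\<lambda>y. ibin (fst y) (snd y) * (\<Sum>a\<le>t. of_nat (t choose a) * D a (P (fst y))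
      * D (t - a + snd y) (Q (s - fst y + int (snd y))))"
  have fin: "finite {y. ibin (fst y) (snd y) * P (fst y) * D (snd y) (Q (s - fst y + int (snd y))) \<noteq> 0}"
    by (rule finite_support_pmul[OF P Q])
  have expand: "D t (ibin (fst y) (snd y) * P (fst y) * D (snd y) (Q (s - fst y + int (snd y)))) = ?F y" for y
  proof -
    have "D t (ibin (fst y) (snd y) * P (fst y) * D (snd y) (Q (s - fst y + int (snd y))))
        = ibin (fst y) (snd y) * D t (P (fst y) * D (snd y) (Q (s - fst y + int (snd y))))"
      by (simp only: mult.assoc ibin_def D_of_int_mult)
    also have "\<dots> = ?F y"
      by (simp only: D_mult D_D)
    finally show ?thesis .
  qed
  have "D t (pmul P Q s) = Sum_any ?F"
    unfolding pmul_def by (simp only: D_Sum_any[OF fin] expand)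
  moreover have "?F y = 0"
    if "ibin (fst y) (snd y) * P (fst y) * D (snd y) (Q (s - fst y + int (snd y))) = 0" for y
    using expand[of y] that by (metis D_0)
  then have "finite {y. ?F y \<noteq> 0}"
    by (blast intro: finite_subset[OF _ fin])
  ultimately have "c * D t (pmul P Q s) = Sum_any (\<lambda>y. c * ?F y)"
    by (simp only: Sum_any_right_distrib)
  also have "\<dots> = Sum_any (\<lambda>y. Sum_any (\<lambda>a. if a \<le> t then
      c * (ibin (fst y) (snd y) * (of_nat (t choose a) * D a (P (fst y))
        * D (t - a + snd y) (Q (s - fst y + int (snd y))))) else 0))"
    by (simp only: sum_distrib_left) (simp only: Sum_any.conditionalize[OF finite_atMost] atMost_iff)
  finally show ?thesis .
qed

text \<open>Both \<open>(PQ)R\<close> and \<open>P(QR)\<close> expand into the sum of these terms over the orders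
  \<open>(m, k)\<close> and \<open>(n, l)\<close> of the factors and an auxiliary index \<open>c\<close>.\<close>
definition assoc_term ::
    "(int \<Rightarrow> 'a) \<Rightarrow> (int \<Rightarrow> 'a) \<Rightarrow> (int \<Rightarrow> 'a) \<Rightarrow> int \<Rightarrow> (int \<times> nat) \<times> (int \<times> nat) \<times> nat \<Rightarrow> 'a" where
  "assoc_term P Q R j = (\<lambda>((m, k), (n, l), c). if c \<le> l then
      ibin m (k + c) * of_nat ((k + c) choose k) * ibin n (l - c)
        * (P m * D k (Q n) * D l (R (j - m + int k - n + int l))) else 0)"

lemma assoc_term_in_box:
  assumes "vanishes_above N P" "vanishes_above N Q" "vanishes_above N R"
    and "assoc_term P Q R j z \<noteq> 0"
  shows "z \<in> assoc_box N j"
proof -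
  obtain m k n l c where z: "z = ((m, k), (n, l), c)"
    by (metis prod.collapse)
  from assms(4) have "P m \<noteq> 0" "Q n \<noteq> 0" "R (j - m + int k - n + int l) \<noteq> 0" "c \<le> l"
    by (auto simp: assoc_term_def z split: if_splits)
  then show ?thesis
    using vanishes_aboveD[OF assms(1)] vanishes_aboveD[OF assms(2)] vanishes_aboveD[OF assms(3)]
    by (auto simp: z intro!: mem_assoc_box)
qed

lemma pmul_left_assoc_eq_Sum_any_pairs:
  assumes P: "vanishes_above N P" and Q: "vanishes_above N Q" and R: "vanishes_above N R"
  shows "pmul (pmul P Q) R j = Sum_any (\<lambda>((m, k), (n, l)).
      ibin (n + m - int k) l * ibin m k * (P m * D k (Q n) * D l (R (j - m + int k - n + int l))))"
    (is "_ = Sum_any ?T")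
proof -
  define G where "G x y = ibin (fst x) (snd x) * (ibin (fst y) (snd y) * P (fst y)
      * D (snd y) (Q (fst x - fst y + int (snd y)))) * D (snd x) (R (j - fst x + int (snd x)))"
    for x y :: "int \<times> nat"
  define \<phi> :: "(int \<times> nat) \<times> (int \<times> nat) \<Rightarrow> (int \<times> nat) \<times> (int \<times> nat)"
    where "\<phi> = (\<lambda>((m, k), (n, l)). ((n + m - int k, l), (m, k)))"
  have bij: "bij \<phi>"
    by (rule bij_betw_byWitness[where f' = "\<lambda>((n', l), (m, k)). ((m, k), (n' - m + int k, l))"])
      (auto simp: \<phi>_def)
  have G_\<phi>: "(\<lambda>(x, y). G x y) \<circ> \<phi> = ?T"
    by (auto simp: fun_eq_iff G_def \<phi>_def algebra_simps)
  have "finite {z. ?T z \<noteq> 0}"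
  proof (rule finite_subset[OF subsetI finite_imageI[OF finite_assoc_box]])
    fix z
    assume "z \<in> {z. ?T z \<noteq> 0}"
    moreover obtain m k n l where z: "z = ((m, k), (n, l))"
      by (metis prod.collapse)
    ultimately have "P m \<noteq> 0" "Q n \<noteq> 0" "R (j - m + int k - n + int l) \<noteq> 0"
      by auto
    then have "((m, k), (n, l), 0) \<in> assoc_box N j"
      using vanishes_aboveD[OF P] vanishes_aboveD[OF Q] vanishes_aboveD[OF R] by (auto intro!: mem_assoc_box)
    then show "z \<in> (\<lambda>(a, b, c). (a, b)) ` assoc_box N j"
      unfolding z by (rule rev_image_eqI) simp
  qed
  then have "finite {z. ((\<lambda>(x, y). G x y) \<circ> \<phi>) z \<noteq> 0}"
    unfolding G_\<phi> .
  then have "finite {z. (\<lambda>(x, y). G x y) z \<noteq> 0}"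
    using finite_support_bij[OF bij, of "\<lambda>(x, y). G x y"] by (simp only: comp_apply)
  moreover have "pmul (pmul P Q) R j = Sum_any (\<lambda>x. Sum_any (\<lambda>y. G x y))"
    unfolding pmul_def[of "pmul P Q"] pmul_def[of P] G_def
    by (intro Sum_any.cong Sum_any_mult_both finite_support_pmul[OF P Q])
  ultimately have "pmul (pmul P Q) R j = Sum_any (\<lambda>(x, y). G x y)"
    using Sum_any_pair[of G] by (simp add: case_prod_unfold)
  also have "\<dots> = Sum_any ?T"
    by (rule Sum_any.reindex_cong[OF bij G_\<phi>])
  finally show ?thesis .
qed

lemma pmul_left_assoc_eq_Sum_any:
  assumes P: "vanishes_above N P" and Q: "vanishes_above N Q" and R: "vanishes_above N R"
  shows "pmul (pmul P Q) R j = Sum_any (assoc_term P Q R j)"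
proof -
  have "pmul (pmul P Q) R j = Sum_any (\<lambda>(a, b). \<Sum>c\<le>snd b. assoc_term P Q R j (a, b, c))"
    unfolding pmul_left_assoc_eq_Sum_any_pairs[OF P Q R]
    by (intro Sum_any.cong) (auto simp: ibin_assoc sum_distrib_right assoc_term_def intro!: sum.cong)
  also have "\<dots> = Sum_any (\<lambda>(a, b, c). if c \<le> snd b then assoc_term P Q R j (a, b, c) else 0)"
    by (rule Sum_any_pair_atMost, rule finite_subset[OF _ finite_assoc_box])
      (auto intro: assoc_term_in_box[OF P Q R])
  also have "\<dots> = Sum_any (assoc_term P Q R j)"
    by (intro Sum_any.cong) (auto simp: assoc_term_def)
  finally show ?thesis .
qed

lemma pmul_right_assoc_eq_Sum_any:
  assumes P: "vanishes_above N P" and Q: "vanishes_above N Q" and R: "vanishes_above N R"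
  shows "pmul P (pmul Q R) j = Sum_any (assoc_term P Q R j)"
proof -
  define Y where "Y x y a = (if a \<le> snd x then ibin (fst x) (snd x) * P (fst x) * (ibin (fst y) (snd y)
      * (of_nat (snd x choose a) * D a (Q (fst y))
        * D (snd x - a + snd y) (R (j - fst x + int (snd x) - fst y + int (snd y))))) else 0)"
    for x y :: "int \<times> nat" and a :: nat
  \<comment> \<open>for \<open>c > l\<close>, \<open>g\<close> returns an index at which \<open>Y\<close> vanishes\<close>
  define g :: "(int \<times> nat) \<times> (int \<times> nat) \<times> nat \<Rightarrow> (int \<times> nat) \<times> (int \<times> nat) \<times> nat"
    where "g = (\<lambda>((m, k), (n, l), c). if c \<le> l then ((m, k + c), (n, l - c), k) else ((m, 0), (n, 0), 1))"
  have Y_box: "(x, y, a) \<in> assoc_box N j" if "Y x y a \<noteq> 0" for x y a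
  proof -
    obtain m k n l where xy: "x = (m, k)" "y = (n, l)"
      by fastforce
    from that have "a \<le> k" "P m \<noteq> 0" "Q n \<noteq> 0" "R (j - m + int k - n + int l) \<noteq> 0"
      by (auto simp: Y_def xy split: if_splits)
    then show ?thesis
      using vanishes_aboveD[OF P] vanishes_aboveD[OF Q] vanishes_aboveD[OF R]
      by (auto simp: xy intro!: mem_assoc_box)
  qed
  have "pmul P (pmul Q R) j = Sum_any (\<lambda>x. Sum_any (\<lambda>y. Sum_any (\<lambda>a. Y x y a)))"
    unfolding pmul_def[of P] Y_def by (simp only: mult_D_pmul_eq_Sum_any[OF Q R])
  also have "\<dots> = Sum_any (\<lambda>(x, y, a). Y x y a)"
    by (rule Sum_any_triple, rule finite_subset[OF _ finite_assoc_box]) (auto intro: Y_box)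
  also have "\<dots> = Sum_any (\<lambda>z. (\<lambda>(x, y, a). Y x y a) (g z))"
  proof (rule Sum_any_reindex_inj_on)
    show "inj_on g {z. (\<lambda>(x, y, a). Y x y a) (g z) \<noteq> 0}"
      by (auto simp: inj_on_def g_def Y_def split: if_splits)
    show "{w. (\<lambda>(x, y, a). Y x y a) w \<noteq> 0} \<subseteq> range g"
    proof clarify
      fix m k' n l' a
      assume "Y (m, k') (n, l') a \<noteq> 0"
      then have "a \<le> k'"
        by (simp add: Y_def split: if_splits)
      then have "((m, k'), (n, l'), a) = g ((m, a), (n, l' + (k' - a)), k' - a)"
        by (simp add: g_def)
      then show "((m, k'), (n, l'), a) \<in> range g"
        by blast
    qed
  qed
  also have "\<dots> = Sum_any (assoc_term P Q R j)"
  proof (rule Sum_any.cong)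
    fix z :: "(int \<times> nat) \<times> (int \<times> nat) \<times> nat"
    obtain m k n l c where z: "z = ((m, k), (n, l), c)"
      by (metis prod.collapse)
    show "(\<lambda>(x, y, a). Y x y a) (g z) = assoc_term P Q R j z"
      by (cases "c \<le> l") (simp_all add: z g_def Y_def assoc_term_def of_nat_diff algebra_simps)
  qed
  finally show ?thesis .
qed

lemma pmul_assoc:
  assumes "is_psdo P" and "is_psdo Q" and "is_psdo R"
  shows "pmul (pmul P Q) R = pmul P (pmul Q R)"
proof -
  obtain N1 N2 N3 where "vanishes_above N1 P" "vanishes_above N2 Q" "vanishes_above N3 R"
    using assms by (auto simp: is_psdo_iff_vanishes_above)
  then have "vanishes_above (max N1 (max N2 N3)) P" "vanishes_above (max N1 (max N2 N3)) Q"
      "vanishes_above (max N1 (max N2 N3)) R"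
    by (auto elim!: vanishes_above_mono)
  then show ?thesis
    using pmul_left_assoc_eq_Sum_any pmul_right_assoc_eq_Sum_any by auto
qed

section \<open>The adjoint is an anti-homomorphism\<close>

definition adj :: "(int \<Rightarrow> 'a) \<Rightarrow> int \<Rightarrow> 'a" where
  "adj P j = Sum_any (\<lambda>k. neg_one_power (j + int k) * ibin (j + int k) k * D k (P (j + int k)))"

lemma finite_adj_indices:
  assumes "vanishes_above N P"
  shows "finite {k::nat. P (j + int k) \<noteq> 0}"
  by (rule finite_subset[of _ "{..nat (N - j)}"]) (auto dest!: vanishes_aboveD[OF assms] simp: le_nat_iff)

lemma finite_support_adj:
  assumes "vanishes_above N P"
  shows "finite {k. neg_one_power (j + int k) * ibin (j + int k) k * D k (P (j + int k)) \<noteq> 0}"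
  by (rule finite_subset[OF _ finite_adj_indices[OF assms, of j]]) auto

lemma padj_eq_adj:
  assumes "vanishes_above N P"
  shows "padj d P = adj P"
proof
  fix j
  have "adj P j = (\<Sum>k\<in>{k. P (j + int k) \<noteq> 0}. neg_one_power (j + int k) * ibin (j + int k) k * D k (P (j + int k)))"
    unfolding adj_def by (rule Sum_any.expand_superset[OF finite_adj_indices[OF assms]]) auto
  then show "padj d P j = adj P j"
    unfolding padj_def by (auto simp: ibin_def neg_one_power_def intro!: sum.cong)
qed

lemma D_adj:
  assumes "vanishes_above N P"
  shows "D l (adj P s) = Sum_any (\<lambda>u. neg_one_power (s + int u) * ibin (s + int u) u
      * D (l + u) (P (s + int u)))"
proof -
  have "D l (neg_one_power (s + int u) * ibin (s + int u) u * D u (P (s + int u)))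
      = neg_one_power (s + int u) * ibin (s + int u) u * D (l + u) (P (s + int u))" for u
    using D_of_int_mult[of l "neg_one_power (s + int u) * ibinom (s + int u) u"]
    by (simp add: ibin_def D_D)
  then show ?thesis
    unfolding adj_def by (simp add: D_Sum_any[OF finite_support_adj[OF assms]])
qed

lemma adj_pmul_eq_Sum_any:
  assumes P: "vanishes_above N P" and Q: "vanishes_above N Q"
  shows "adj (pmul P Q) j = Sum_any (\<lambda>((m, a), e).
      (\<Sum>c\<le>e. neg_one_power (j + int a + int c) * ibin (j + int a + int c) (a + c)
          * of_nat ((a + c) choose a) * ibin m (e - c))
      * (D a (P m) * D e (Q (j - m + int a + int e))))"
proof -
  define Y where "Y t y a = (if a \<le> t then neg_one_power (j + int t) * ibin (j + int t) t
      * (ibin (fst y) (snd y) * (of_nat (t choose a) * D a (P (fst y))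
        * D (t - a + snd y) (Q (j + int t - fst y + int (snd y))))) else 0)"
    for t :: nat and y :: "int \<times> nat" and a :: nat
  define W where "W x e c = neg_one_power (j + int (snd x) + int c) * ibin (j + int (snd x) + int c) (snd x + c)
      * of_nat ((snd x + c) choose snd x) * ibin (fst x) (e - c)
      * (D (snd x) (P (fst x)) * D e (Q (j - fst x + int (snd x) + int e)))"
    for x :: "int \<times> nat" and e c :: nat
  \<comment> \<open>for \<open>c > e\<close>, \<open>g\<close> returns an index at which \<open>Y\<close> vanishes\<close>
  define g :: "(int \<times> nat) \<times> nat \<times> nat \<Rightarrow> nat \<times> (int \<times> nat) \<times> nat"
    where "g = (\<lambda>((m, a), e, c). if c \<le> e then (a + c, (m, e - c), a) else (0, (0, 0), 1))"
  have Y_bounds: "a \<le> t \<and> m \<le> N \<and> j + int t - m + int l \<le> N" if "Y t (m, l) a \<noteq> 0" for t m l a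
  proof -
    from that have "a \<le> t" "P m \<noteq> 0" "Q (j + int t - m + int l) \<noteq> 0"
      by (auto simp: Y_def split: if_splits)
    then show ?thesis
      using vanishes_aboveD[OF P] vanishes_aboveD[OF Q] by blast
  qed
  have W_bounds: "m \<le> N \<and> j - m + int a + int e \<le> N" if "W (m, a) e c \<noteq> 0" for m a e c
  proof -
    from that have "P m \<noteq> 0" "Q (j - m + int a + int e) \<noteq> 0"
      by (auto simp: W_def)
    then show ?thesis
      using vanishes_aboveD[OF P] vanishes_aboveD[OF Q] by blast
  qed
  let ?B = "{..nat (2 * N - j)}"
  have "adj (pmul P Q) j = Sum_any (\<lambda>t. Sum_any (\<lambda>y. Sum_any (\<lambda>a. Y t y a)))"
    unfolding adj_def Y_def by (simp only: mult_D_pmul_eq_Sum_any[OF P Q])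
  also have "\<dots> = Sum_any (\<lambda>(t, y, a). Y t y a)"
    by (rule Sum_any_triple, rule finite_subset[of _ "?B \<times> ({j - N..N} \<times> ?B) \<times> ?B"])
      (auto dest!: Y_bounds simp: le_nat_iff)
  also have "\<dots> = Sum_any (\<lambda>w. (\<lambda>(t, y, a). Y t y a) (g w))"
  proof (rule Sum_any_reindex_inj_on)
    show "inj_on g {w. (\<lambda>(t, y, a). Y t y a) (g w) \<noteq> 0}"
      by (auto simp: inj_on_def g_def Y_def split: if_splits)
    show "{z. (\<lambda>(t, y, a). Y t y a) z \<noteq> 0} \<subseteq> range g"
    proof clarify
      fix t m l a
      assume "Y t (m, l) a \<noteq> 0"
      then have "a \<le> t"
        by (simp add: Y_def split: if_splits)
      then have "(t, (m, l), a) = g ((m, a), l + (t - a), t - a)"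
        by (simp add: g_def)
      then show "(t, (m, l), a) \<in> range g"
        by blast
    qed
  qed
  also have "\<dots> = Sum_any (\<lambda>(x, e, c). if c \<le> e then W x e c else 0)"
    by (intro Sum_any.cong) (auto simp: g_def Y_def W_def of_nat_diff algebra_simps)
  also have "\<dots> = Sum_any (\<lambda>(x, e). \<Sum>c\<le>e. W x e c)"
    by (rule Sum_any_pair_atMost[symmetric], rule finite_subset[of _ "({j - N..N} \<times> ?B) \<times> ?B \<times> ?B"])
      (auto simp: le_nat_iff dest!: W_bounds)
  finally show ?thesis
    by (simp add: W_def sum_distrib_right case_prod_unfold)
qed

lemma pmul_adj_adj_eq_Sum_any_triples:
  assumes P: "vanishes_above N P" and Q: "vanishes_above N Q"
  shows "pmul (adj Q) (adj P) j = Sum_any (\<lambda>((n, l), r, u). ibin n l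
      * (neg_one_power (n + int r) * ibin (n + int r) r * D r (Q (n + int r)))
      * (neg_one_power (j - n + int l + int u) * ibin (j - n + int l + int u) u
          * D (l + u) (P (j - n + int l + int u))))"
    (is "_ = Sum_any ?T")
proof -
  define A where "A y r = neg_one_power (fst y + int r) * ibin (fst y + int r) r * D r (Q (fst y + int r))"
    for y :: "int \<times> nat" and r :: nat
  define B where "B y u = neg_one_power (j - fst y + int (snd y) + int u)
      * ibin (j - fst y + int (snd y) + int u) u * D (snd y + u) (P (j - fst y + int (snd y) + int u))"
    for y :: "int \<times> nat" and u :: nat
  have "ibin (fst y) (snd y) * adj Q (fst y) * D (snd y) (adj P (j - fst y + int (snd y)))
      = Sum_any (\<lambda>r. Sum_any (\<lambda>u. ibin (fst y) (snd y) * A y r * B y u))" for y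
  proof -
    have "finite {u. B y u \<noteq> 0}"
      by (rule finite_subset[OF _ finite_adj_indices[OF P, of "j - fst y + int (snd y)"]])
        (auto simp: B_def)
    moreover have "finite {r. A y r \<noteq> 0}"
      using finite_support_adj[OF Q] by (simp add: A_def)
    moreover have "adj Q (fst y) = Sum_any (A y)"
      by (simp add: adj_def A_def)
    moreover have "D (snd y) (adj P (j - fst y + int (snd y))) = Sum_any (B y)"
      by (simp add: D_adj[OF P] B_def add.assoc)
    ultimately show ?thesis
      by (simp add: Sum_any_mult_Sum_any)
  qed
  then have "pmul (adj Q) (adj P) j
      = Sum_any (\<lambda>y. Sum_any (\<lambda>r. Sum_any (\<lambda>u. ibin (fst y) (snd y) * A y r * B y u)))"
    by (simp add: pmul_def)
  also have "\<dots> = Sum_any (\<lambda>(y, r, u). ibin (fst y) (snd y) * A y r * B y u)"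
  proof (rule Sum_any_triple, rule finite_subset[OF subsetI])
    let ?B = "{..nat (2 * N - j)}"
    fix z
    assume "z \<in> {(y, r, u). ibin (fst y) (snd y) * A y r * B y u \<noteq> 0}"
    moreover obtain n l r u where z: "z = ((n, l), r, u)"
      by (metis prod.collapse)
    ultimately have "Q (n + int r) \<noteq> 0" "P (j - n + int l + int u) \<noteq> 0"
      by (auto simp: A_def B_def)
    then show "z \<in> ({j - N..N} \<times> ?B) \<times> ?B \<times> ?B"
      unfolding z using vanishes_aboveD[OF P] vanishes_aboveD[OF Q] by (fastforce simp: le_nat_iff)
  qed simp
  also have "\<dots> = Sum_any ?T"
    by (simp add: A_def B_def case_prod_unfold)
  finally show ?thesis .
qed

lemma pmul_adj_adj_eq_Sum_any:
  assumes P: "vanishes_above N P" and Q: "vanishes_above N Q"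
  shows "pmul (adj Q) (adj P) j = Sum_any (\<lambda>((m, a), e).
      (neg_one_power (j - m + int a + int e) * neg_one_power m * ibin (j - m + int a + int e) e
          * (\<Sum>c\<le>a. ibin (j - m + int a) c * ibin m (a - c)))
      * (D a (P m) * D e (Q (j - m + int a + int e))))"
proof -
  define W where "W x a c = ibin (j - fst x + int a) c * neg_one_power (j - fst x + int a + int (snd x))
      * ibin (j - fst x + int a + int (snd x)) (snd x) * neg_one_power (fst x) * ibin (fst x) (a - c)
      * (D a (P (fst x)) * D (snd x) (Q (j - fst x + int a + int (snd x))))"
    for x :: "int \<times> nat" and a c :: nat
  define h :: "(int \<times> nat) \<times> nat \<times> nat \<Rightarrow> (int \<times> nat) \<times> nat \<times> nat"
    where "h = (\<lambda>((n, l), r, u). ((j - n + int l + int u, r), l + u, l))"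
  have W_bounds: "m \<le> N \<and> j - m + int a + int e \<le> N" if "W (m, e) a c \<noteq> 0" for m a e c
  proof -
    from that have "P m \<noteq> 0" "Q (j - m + int a + int e) \<noteq> 0"
      by (auto simp: W_def)
    then show ?thesis
      using vanishes_aboveD[OF P] vanishes_aboveD[OF Q] by blast
  qed
  let ?B = "{..nat (2 * N - j)}"
  have "pmul (adj Q) (adj P) j = Sum_any (\<lambda>z. (\<lambda>(x, a, c). if c \<le> a then W x a c else 0) (h z))"
    unfolding pmul_adj_adj_eq_Sum_any_triples[OF P Q]
    by (intro Sum_any.cong) (auto simp: h_def W_def mult_ac)
  also have "\<dots> = Sum_any (\<lambda>(x, a, c). if c \<le> a then W x a c else 0)"
  proof (rule Sum_any_reindex_inj_on[symmetric])
    show "inj_on h {z. (\<lambda>(x, a, c). if c \<le> a then W x a c else 0) (h z) \<noteq> 0}"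
      by (auto simp: inj_on_def h_def)
    show "{w. (\<lambda>(x, a, c). if c \<le> a then W x a c else 0) w \<noteq> 0} \<subseteq> range h"
    proof clarify
      fix m e a c
      assume "(if c \<le> a then W (m, e) a c else 0) \<noteq> 0"
      then have "((m, e), a, c) = h ((j - m + int a, c), e, a - c)"
        by (simp add: h_def split: if_splits)
      then show "((m, e), a, c) \<in> range h"
        by blast
    qed
  qed
  also have "\<dots> = Sum_any (\<lambda>(x, a). \<Sum>c\<le>a. W x a c)"
    by (rule Sum_any_pair_atMost[symmetric], rule finite_subset[of _ "({j - N..N} \<times> ?B) \<times> ?B \<times> ?B"])
      (auto simp: le_nat_iff dest!: W_bounds)
  also have "\<dots> = Sum_any (\<lambda>((m, a), e). \<Sum>c\<le>a. W (m, e) a c)"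
    by (rule Sum_any.reindex_cong[where l = "\<lambda>((m, a), e). ((m, e), a)"])
      (auto intro!: bij_betw_byWitness[where f' = "\<lambda>((m, e), a). ((m, a), e)"])
  finally show ?thesis
    by (simp add: W_def sum_distrib_left sum_distrib_right case_prod_unfold mult_ac)
qed

lemma adj_pmul:
  assumes "is_psdo P" and "is_psdo Q"
  shows "adj (pmul P Q) = pmul (adj Q) (adj P)"
proof
  fix j
  obtain N1 N2 where "vanishes_above N1 P" "vanishes_above N2 Q"
    using assms by (auto simp: is_psdo_iff_vanishes_above)
  then have "vanishes_above (max N1 N2) P" "vanishes_above (max N1 N2) Q"
    by (auto elim!: vanishes_above_mono)
  then show "adj (pmul P Q) j = pmul (adj Q) (adj P) j"
    by (simp only: adj_pmul_eq_Sum_any pmul_adj_adj_eq_Sum_any ibin_adjoint_identity)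
qed

lemma d_neg_one_power [simp]: "d (neg_one_power z) = 0"
  by (simp add: neg_one_power_def)

lemma pmul_pdpow_right: "pmul P (pdpow c) j = P (j - c)"
proof -
  have "pmul P (pdpow c) j = Sum_any (\<lambda>p. if p = (j - c, 0::nat) then P (j - c) else 0)"
    unfolding pmul_def by (rule Sum_any.cong) (force simp: pdpow_def D_1 prod_eq_iff)
  then show ?thesis
    by simp
qed

lemma pmul_pdpow_pdpow: "pmul (pdpow a) (pdpow b) = pdpow (a + b)"
  by (rule ext) (simp only: pmul_pdpow_right, simp add: pdpow_def)

lemma pmul_pdpow_0_left [simp]: "pmul (pdpow 0) Q = Q"
proof
  fix j
  have "pmul (pdpow 0) Q j = Sum_any (\<lambda>p. if p = (0::int, 0::nat) then Q j else 0)"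
    unfolding pmul_def by (rule Sum_any.cong) (force simp: pdpow_def ibin_0_left prod_eq_iff)
  then show "pmul (pdpow 0) Q j = Q j"
    by simp
qed

lemma pmul_pdpow_0_right [simp]: "pmul P (pdpow 0) = P"
  by (rule ext) (simp add: pmul_pdpow_right)

lemma pmul_pscale_left:
  assumes "is_psdo P" and "is_psdo Q"
  shows "pmul (pscale c P) Q = pscale c (pmul P Q)"
proof
  fix j
  obtain N M where P: "vanishes_above N P" and Q: "vanishes_above M Q"
    using assms by (auto simp: is_psdo_iff_vanishes_above)
  have "pmul (pscale c P) Q j
      = Sum_any (\<lambda>p. c * (ibin (fst p) (snd p) * P (fst p) * D (snd p) (Q (j - fst p + int (snd p)))))"
    unfolding pmul_def pscale_def by (simp add: mult_ac)
  also have "\<dots> = c * pmul P Q j"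
    unfolding pmul_def by (rule Sum_any_right_distrib[OF finite_support_pmul[OF P Q], symmetric])
  finally show "pmul (pscale c P) Q j = pscale c (pmul P Q) j"
    by (simp add: pscale_def)
qed

lemma pmul_pscale_right:
  assumes "d c = 0" and "is_psdo P" and "is_psdo Q"
  shows "pmul P (pscale c Q) = pscale c (pmul P Q)"
proof
  fix j
  obtain N M where P: "vanishes_above N P" and Q: "vanishes_above M Q"
    using assms by (auto simp: is_psdo_iff_vanishes_above)
  have "pmul P (pscale c Q) j
      = Sum_any (\<lambda>p. c * (ibin (fst p) (snd p) * P (fst p) * D (snd p) (Q (j - fst p + int (snd p)))))"
    unfolding pmul_def pscale_def by (simp add: D_const_mult[OF assms(1)] mult_ac)
  also have "\<dots> = c * pmul P Q j"
    unfolding pmul_def by (rule Sum_any_right_distrib[OF finite_support_pmul[OF P Q], symmetric])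
  finally show "pmul P (pscale c Q) j = pscale c (pmul P Q) j"
    by (simp add: pscale_def)
qed

lemma adj_pdpow: "adj (pdpow m) = pscale (neg_one_power m) (pdpow m)"
proof
  fix j
  have "adj (pdpow m) j = Sum_any (\<lambda>k::nat. if k = 0 then (if j = m then neg_one_power m else 0) else 0)"
    unfolding adj_def by (rule Sum_any.cong) (auto simp: pdpow_def D_1)
  then show "adj (pdpow m) j = pscale (neg_one_power m) (pdpow m) j"
    by (simp add: pscale_def pdpow_def)
qed

lemma adj_pconst: "adj (pconst a) = pconst a"
proof
  fix j
  have "adj (pconst a) j = Sum_any (\<lambda>k::nat. if k = 0 then (if j = 0 then a else 0) else 0)"
    unfolding adj_def by (rule Sum_any.cong) (auto simp: pconst_def ibin_0_left neg_one_power_def)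
  then show "adj (pconst a) j = pconst a j"
    by (simp add: pconst_def)
qed

lemma adj_padd:
  assumes "is_psdo P" and "is_psdo Q"
  shows "adj (padd P Q) = padd (adj P) (adj Q)"
proof
  fix j
  obtain N M where "vanishes_above N P" "vanishes_above M Q"
    using assms by (auto simp: is_psdo_iff_vanishes_above)
  then show "adj (padd P Q) j = padd (adj P) (adj Q) j"
    unfolding adj_def padd_def
    by (simp add: D_add distrib_left Sum_any.distrib[OF finite_support_adj finite_support_adj])
qed

lemma adj_cong_above: "(\<And>i. i \<ge> j \<Longrightarrow> P i = Q i) \<Longrightarrow> adj P j = adj Q j"
  unfolding adj_def by (rule Sum_any.cong) simp

lemma adj_pplus: "adj (pplus P) = pplus (adj P)"
proof
  fix j
  show "adj (pplus P) j = pplus (adj P) j"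
  proof (cases "0 \<le> j")
    case True
    then have "adj (pplus P) j = adj P j"
      by (intro adj_cong_above) (simp add: pplus_def)
    with True show ?thesis
      by (simp add: pplus_def)
  next
    case False
    then have "neg_one_power (j + int k) * ibin (j + int k) k * D k (pplus P (j + int k)) = 0" for k
      by (auto simp: pplus_def ibin_def ibinom_eq_0_if_nonneg_less)
    with False show ?thesis
      by (simp add: adj_def pplus_def)
  qed
qed

lemma adj_at_minus_one: "adj P (- 1) = - P (- 1)"
proof -
  have "adj P (- 1) = Sum_any (\<lambda>k::nat. if k = 0 then - P (- 1) else 0)"
  proof (unfold adj_def, intro Sum_any.cong)
    fix k :: nat
    show "neg_one_power (- 1 + int k) * ibin (- 1 + int k) k * D k (P (- 1 + int k))
        = (if k = 0 then - P (- 1) else 0)"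
      by (cases k) (simp add: neg_one_power_def, simp add: ibin_def ibinom_eq_0_if_nonneg_less)
  qed
  then show ?thesis
    by simp
qed

lemma adj_sum:
  assumes "finite A" and "\<And>k. k \<in> A \<Longrightarrow> is_psdo (G k)"
  shows "adj (\<lambda>i. \<Sum>k\<in>A. G k i) j = (\<Sum>k\<in>A. adj (G k) j)"
proof -
  have "finite {t. neg_one_power (j + int t) * ibin (j + int t) t * D t (G k (j + int t)) \<noteq> 0}"
    if "k \<in> A" for k
    using assms(2)[OF that] by (auto simp: is_psdo_iff_vanishes_above intro: finite_support_adj)
  then show ?thesis
    unfolding adj_def by (simp add: D_sum sum_distrib_left Sum_any_sum[OF assms(1)])
qed

lemma adj_psum:
  assumes "\<And>k. vanishes_above (- int k) (F k)" and "\<And>k. adj (F k) = F k"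
  shows "adj (psum F) = psum F"
proof
  fix j
  define K where "K = {..nat (- j)}"
  define S where "S i = (\<Sum>k\<in>K. F k i)" for i
  have truncate: "psum F i = S i" if "i \<ge> j" for i
  proof -
    have "{k. F k i \<noteq> 0} \<subseteq> K"
      using that vanishes_aboveD[OF assms(1)] by (fastforce simp: K_def)
    then show ?thesis
      unfolding psum_def S_def by (intro sum.mono_neutral_left) (auto simp: K_def)
  qed
  have "adj (psum F) j = adj S j"
    by (rule adj_cong_above) (simp add: truncate)
  also have "\<dots> = (\<Sum>k\<in>K. adj (F k) j)"
    unfolding S_def using assms(1) by (intro adj_sum) (auto simp: K_def is_psdo_iff_vanishes_above)
  also have "\<dots> = psum F j"
    by (simp add: assms(2) truncate flip: S_def)
  finally show "adj (psum F) j = psum F j" .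
qed

lemma ppow_vanishes_above_and_Suc_pmul:
  assumes "vanishes_above N P"
  shows "vanishes_above (int n * N) (ppow d P n) \<and> ppow d P (Suc n) = pmul (ppow d P n) P"
proof (induct n)
  case 0
  have unit: "vanishes_above 0 (pdpow 0)"
    by (simp add: vanishes_above_def pdpow_def)
  then show ?case
    by (simp add: pmult_eq_pmul[OF unit assms])
next
  case (Suc n)
  then have bound: "vanishes_above (int (Suc n) * N) (ppow d P (Suc n))"
    using vanishes_above_pmul[OF _ assms, of "int n * N"] by (simp add: algebra_simps)
  moreover have "ppow d P (Suc (Suc n)) = pmul (ppow d P (Suc n)) P"
    unfolding ppow.simps(2)[of d P "Suc n"] by (rule pmult_eq_pmul[OF bound assms])
  ultimately show ?case ..
qed

declare ppow.simps(2) [simp del]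

lemma is_psdo_ppow [simp]: "is_psdo P \<Longrightarrow> is_psdo (ppow d P n)"
  using ppow_vanishes_above_and_Suc_pmul by (auto simp: is_psdo_iff_vanishes_above)

lemma ppow_Suc_pmul: "is_psdo P \<Longrightarrow> ppow d P (Suc n) = pmul (ppow d P n) P"
  using ppow_vanishes_above_and_Suc_pmul by (auto simp: is_psdo_iff_vanishes_above)

lemma pmul_ppow_commute:
  assumes "is_psdo P"
  shows "pmul P (ppow d P n) = pmul (ppow d P n) P"
proof (induct n)
  case (Suc n)
  then show ?case
    using assms by (simp add: ppow_Suc_pmul pmul_assoc[symmetric])
qed simp

section \<open>Powers of the Lax operator\<close>

context
  fixes v :: "nat \<Rightarrow> 'a"
begin

definition Lax_tail :: "nat \<Rightarrow> int \<Rightarrow> 'a" where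
  "Lax_tail k = (if k = 0 then (\<lambda>_. 0)
     else pmult d (pmult d (pdpow (- int k)) (pconst (v k))) (pdpow (- int k)))"

text \<open>\<open>dLax\<close> is \<open>\<partial> L = \<partial>\<^sup>2 + v\<^sub>0 + \<Sum>\<^sub>k \<partial>\<^sup>-\<^sup>k v\<^sub>k \<partial>\<^sup>-\<^sup>k\<close>, see \<open>Lax_eq_pmul\<close>.\<close>
definition dLax :: "int \<Rightarrow> 'a" where
  "dLax = padd (padd (pdpow 2) (pconst (v 0))) (psum Lax_tail)"

lemma Lax_tail_eq:
  assumes "k \<noteq> 0"
  shows "Lax_tail k = pmul (pmul (pdpow (- int k)) (pconst (v k))) (pdpow (- int k))"
proof -
  have p: "vanishes_above (- int k) (pdpow (- int k))" and c: "vanishes_above 0 (pconst (v k))"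
    by (simp_all add: vanishes_above_def pdpow_def pconst_def)
  show ?thesis
    using assms
    by (simp add: Lax_tail_def pmult_eq_pmul[OF p c] pmult_eq_pmul[OF vanishes_above_pmul[OF p c] p])
qed

lemma vanishes_above_Lax_tail: "vanishes_above (- int k) (Lax_tail k)"
proof (cases "k = 0")
  case False
  have p: "vanishes_above (- int k) (pdpow (- int k))" and c: "vanishes_above 0 (pconst (v k))"
    by (simp_all add: vanishes_above_def pdpow_def pconst_def)
  have "vanishes_above (- int k + 0 + - int k) (Lax_tail k)"
    unfolding Lax_tail_eq[OF False] by (intro vanishes_above_pmul p c)
  then show ?thesis
    by (rule vanishes_above_mono) simp
qed (simp add: Lax_tail_def vanishes_above_def)

lemma adj_Lax_tail: "adj (Lax_tail k) = Lax_tail k"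
proof (cases "k = 0")
  case True
  then show ?thesis
    by (simp add: Lax_tail_def adj_def fun_eq_iff)
next
  case False
  let ?A = "pdpow (- int k) :: int \<Rightarrow> 'a" and ?c = "pconst (v k)" and ?s = "neg_one_power (- int k) :: 'a"
  have "adj (Lax_tail k) = pmul (pscale ?s ?A) (pmul ?c (pscale ?s ?A))"
    by (simp add: Lax_tail_eq[OF False] adj_pmul adj_pdpow adj_pconst)
  also have "\<dots> = pscale (?s * ?s) (pmul ?A (pmul ?c ?A))"
    by (simp add: pmul_pscale_left pmul_pscale_right pscale_pscale)
  also have "\<dots> = Lax_tail k"
    by (simp add: neg_one_power_square Lax_tail_eq[OF False] pmul_assoc)
  finally show ?thesis .
qed

lemma vanishes_above_psum_Lax_tail: "vanishes_above 0 (psum Lax_tail)"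
  using vanishes_above_Lax_tail by (force simp: vanishes_above_def psum_def)

lemma vanishes_above_dLax: "vanishes_above 2 dLax"
  using vanishes_above_psum_Lax_tail
  by (auto simp: dLax_def vanishes_above_def padd_def pdpow_def pconst_def)

lemma is_psdo_dLax [simp]: "is_psdo dLax"
  using vanishes_above_dLax by (auto simp: is_psdo_iff_vanishes_above)

lemma adj_dLax: "adj dLax = dLax"
proof -
  have "is_psdo (psum Lax_tail)"
    using vanishes_above_psum_Lax_tail by (auto simp: is_psdo_iff_vanishes_above)
  then show ?thesis
    by (simp add: dLax_def adj_padd adj_pdpow adj_pconst adj_psum[OF vanishes_above_Lax_tail adj_Lax_tail]
        neg_one_power_def)
qed

lemma Lax_eq_pmul: "Lax d v = pmul (pdpow (- 1)) dLax"
proof -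
  have "Lax d v = pmult d (pdpow (- 1)) dLax"
    unfolding Lax_def dLax_def Lax_tail_def ..
  also have "\<dots> = pmul (pdpow (- 1)) dLax"
    by (rule pmult_eq_pmul[where N = "- 1", OF _ vanishes_above_dLax]) (simp add: vanishes_above_def pdpow_def)
  finally show ?thesis .
qed

lemma vanishes_above_Lax: "vanishes_above 1 (Lax d v)"
proof -
  have "vanishes_above (- 1) (pdpow (- 1))"
    by (simp add: vanishes_above_def pdpow_def)
  from vanishes_above_pmul[OF this vanishes_above_dLax] show ?thesis
    by (simp add: Lax_eq_pmul)
qed

lemma is_psdo_Lax [simp]: "is_psdo (Lax d v)"
  using vanishes_above_Lax by (auto simp: is_psdo_iff_vanishes_above)

lemma pdpow_mult_Lax: "pmul (pdpow 1) (Lax d v) = dLax"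
  by (simp add: Lax_eq_pmul pmul_assoc[symmetric] pmul_pdpow_pdpow)

lemma adj_Lax: "adj (Lax d v) = pscale (- 1) (pmul dLax (pdpow (- 1)))"
  by (simp add: Lax_eq_pmul adj_pmul adj_dLax adj_pdpow pmul_pscale_right neg_one_power_def)

lemma adj_ppow_Lax:
  "adj (ppow d (Lax d v) n)
     = pscale (neg_one_power n) (pmul (pmul (pdpow 1) (ppow d (Lax d v) n)) (pdpow (- 1)))"
proof (induct n)
  case 0
  show ?case
    by (simp add: adj_pdpow pmul_pdpow_pdpow)
next
  case (Suc n)
  let ?L = "Lax d v" and ?M = "ppow d (Lax d v) n"
  have "pmul (pmul dLax (pdpow (- 1))) (pmul (pmul (pdpow 1) ?M) (pdpow (- 1)))
      = pmul (pmul dLax (pmul (pmul (pdpow (- 1)) (pdpow 1)) ?M)) (pdpow (- 1))"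
    by (simp add: pmul_assoc)
  also have "\<dots> = pmul (pmul (pmul (pdpow 1) ?L) ?M) (pdpow (- 1))"
    by (simp add: pmul_pdpow_pdpow pdpow_mult_Lax)
  also have "\<dots> = pmul (pmul (pdpow 1) (ppow d ?L (Suc n))) (pdpow (- 1))"
    by (simp add: pmul_assoc pmul_ppow_commute ppow_Suc_pmul)
  finally have shift: "pmul (pmul dLax (pdpow (- 1))) (pmul (pmul (pdpow 1) ?M) (pdpow (- 1)))
      = pmul (pmul (pdpow 1) (ppow d ?L (Suc n))) (pdpow (- 1))" .
  have "adj (ppow d ?L (Suc n)) = pmul (adj ?L) (adj ?M)"
    by (simp add: ppow_Suc_pmul adj_pmul)
  also have "\<dots> = pscale (- neg_one_power n)
      (pmul (pmul dLax (pdpow (- 1))) (pmul (pmul (pdpow 1) ?M) (pdpow (- 1))))"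
    by (simp add: adj_Lax Suc pmul_pscale_left pmul_pscale_right pscale_pscale)
  also have "- neg_one_power n = (neg_one_power (int (Suc n)) :: 'a)"
    by (simp add: neg_one_power_def)
  finally show ?case
    by (simp only: shift)
qed

lemma adj_odd_ppow_Lax_mult_dinv:
  "adj (pmul (ppow d (Lax d v) (2 * n + 1)) (pdpow (- 1)))
     = pmul (ppow d (Lax d v) (2 * n + 1)) (pdpow (- 1))"
proof -
  let ?M = "ppow d (Lax d v) (2 * n + 1)"
  have "neg_one_power (int (2 * n + 1)) * neg_one_power (- 1) = (1 :: 'a)"
    by (simp add: neg_one_power_def)
  then have "adj (pmul ?M (pdpow (- 1))) = pmul (pmul (pdpow (- 1)) (pmul (pdpow 1) ?M)) (pdpow (- 1))"
    by (simp add: adj_pmul adj_ppow_Lax adj_pdpow pmul_pscale_left pmul_pscale_right pscale_pscale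
        pmul_assoc)
  also have "\<dots> = pmul ?M (pdpow (- 1))"
    by (simp add: pmul_assoc[symmetric] pmul_pdpow_pdpow)
  finally show ?thesis .
qed

lemma Aop_mult_dinv_self_adjoint_diffop:
  assumes two: "\<And>x::'a. x + x = 0 \<Longrightarrow> x = 0"
  shows "is_diffop (pmult d (Aop d v n) (pdpow (- 1)))
    \<and> self_adjoint d (pmult d (Aop d v n) (pdpow (- 1)))"
proof -
  define M where "M = ppow d (Lax d v) (2 * n + 1)"
  define B where "B = pmul M (pdpow (- 1))"
  have adj_B: "adj B = B"
    unfolding B_def M_def by (rule adj_odd_ppow_Lax_mult_dinv)
  have "B (- 1) = 0"
    using adj_at_minus_one[of B] two[of "B (- 1)"] by (simp add: adj_B eq_neg_iff_add_eq_0)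
  then have truncate: "pmul (pplus M) (pdpow (- 1)) = pplus B"
    by (intro ext, case_tac "x = - 1") (auto simp: pmul_pdpow_right pplus_def B_def)
  have "is_psdo (pplus M)" and "is_psdo (pplus B)"
    by (simp_all add: M_def B_def)
  then obtain N K where M: "vanishes_above N (pplus M)" and B: "vanishes_above K (pplus B)"
    by (auto simp: is_psdo_iff_vanishes_above)
  have "pmult d (Aop d v n) (pdpow (- 1)) = pplus B"
    unfolding Aop_def M_def[symmetric] truncate[symmetric]
    by (rule pmult_eq_pmul[where M = "- 1", OF M]) (simp add: vanishes_above_def pdpow_def)
  moreover have "is_diffop (pplus B)"
    using B by (auto simp: is_diffop_def is_psdo_iff_vanishes_above pplus_def)
  moreover have "self_adjoint d (pplus B)"
    by (simp add: self_adjoint_def padj_eq_adj[OF B] adj_pplus adj_B)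
  ultimately show ?thesis
    by simp
qed

end

end

theorem lemma2:
  fixes d1 d2 :: "'a::{idom, ring_char_0} \<Rightarrow> 'a"
    and u :: 'a and v w :: "nat \<Rightarrow> 'a"
  assumes "is_derivation d1" and "is_derivation d2"
    and "\<And>a. d1 (d2 a) = d2 (d1 a)"
    and "(\<lambda>j. d2 (Lax d1 v j)) =
           psub (pmult d1 (Lax d1 v) (pmult d1 (pdpow (-1)) (pconst u)))
                (pmult d1 (pmult d1 (pdpow (-1)) (pconst u)) (Lax d1 v))"
    and "(\<lambda>j. d1 (Lax d2 w j)) =
           psub (pmult d2 (Lax d2 w) (pmult d2 (pdpow (-1)) (pconst u)))
                (pmult d2 (pmult d2 (pdpow (-1)) (pconst u)) (Lax d2 w))"
  shows "\<forall>n. is_diffop (pmult d1 (Aop d1 v n) (pdpow (-1)))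
            \<and> self_adjoint d1 (pmult d1 (Aop d1 v n) (pdpow (-1)))
            \<and> is_diffop (pmult d2 (Aop d2 w n) (pdpow (-1)))
            \<and> self_adjoint d2 (pmult d2 (Aop d2 w n) (pdpow (-1)))"
proof -
  have two: "x + x = 0 \<Longrightarrow> x = 0" for x :: 'a
    by (simp flip: mult_2)
  interpret D1: derivation d1
    by (rule derivation.intro) fact
  interpret D2: derivation d2
    by (rule derivation.intro) fact
  show ?thesis
    using D1.Aop_mult_dinv_self_adjoint_diffop[OF two] D2.Aop_mult_dinv_self_adjoint_diffop[OF two]
    by blast
qed

end
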